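(* Let $X$ be a $T_1$ topological space. Then $T''(X)$ is a ring under pointwise addition and multiplication.
   Context: For a topological space $X$, $C(X)$ denotes the set of real-valued continuous functions on $X$. A cozero set in $X$ is a set of the form $coz(g)=\{x\in X: g(x)\neq 0\}$ with $g\in C(X)$. $T''(X)$ denotes the set of all functions $f\colon X\to\mathbb{R}$ for which there is a dense cozero set $U$ of $X$ such that the restriction $f|_U$ is continuous. *)

theory Defs
  imports "HOL-Analysis.Analysis" "HOL-Algebra.Ring"
begin

definition coz :: "'a topology \<Rightarrow> ('a \<Rightarrow> real) \<Rightarrow> 'a set" where
  "coz X g = {x \<in> topspace X. g x \<noteq> 0}"

definition Tpp :: "'a topology \<Rightarrow> ('a \<Rightarrow> real) set" where
  "Tpp X = {f \<in> extensional (topspace X).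
     \<exists>g. continuous_map X euclideanreal g \<and> X closure_of (coz X g) = topspace X
         \<and> continuous_map (subtopology X (coz X g)) euclideanreal f}"

definition Tpp_ring :: "'a topology \<Rightarrow> ('a \<Rightarrow> real) ring" where
  "Tpp_ring X = \<lparr>carrier = Tpp X,
     mult = (\<lambda>f g. \<lambda>x\<in>topspace X. f x * g x),
     one = (\<lambda>x\<in>topspace X. 1),
     zero = (\<lambda>x\<in>topspace X. 0),
     add = (\<lambda>f g. \<lambda>x\<in>topspace X. f x + g x)\<rparr>"

end

theory Submission
  imports Defs
begin

text \<open>The cozero set of a product is the intersection of the cozero sets, and the intersection
  of two dense sets one of which is open is dense. Hence any two members of \<open>T''(X)\<close> are
  continuous on one common dense cozero set, and so is every continuous pointwise combination
  of them. Pointwise operations on functions extensional on \<open>topspace X\<close> satisfy the ring laws,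
  so closure under them is all that remains.\<close>

lemma ring_pointwiseI:
  fixes S :: "('a \<Rightarrow> 'b::ring_1) set"
  assumes ext: "S \<subseteq> extensional A"
    and add: "\<And>f g. f \<in> S \<Longrightarrow> g \<in> S \<Longrightarrow> (\<lambda>x\<in>A. f x + g x) \<in> S"
    and mult: "\<And>f g. f \<in> S \<Longrightarrow> g \<in> S \<Longrightarrow> (\<lambda>x\<in>A. f x * g x) \<in> S"
    and uminus: "\<And>f. f \<in> S \<Longrightarrow> (\<lambda>x\<in>A. - f x) \<in> S"
    and zero: "(\<lambda>x\<in>A. 0) \<in> S"
    and one: "(\<lambda>x\<in>A. 1) \<in> S"
  shows "ring \<lparr>carrier = S, mult = (\<lambda>f g. \<lambda>x\<in>A. f x * g x), one = (\<lambda>x\<in>A. 1),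
    zero = (\<lambda>x\<in>A. 0), add = (\<lambda>f g. \<lambda>x\<in>A. f x + g x)\<rparr>"
    (is "ring ?R")
proof -
  have restrict_eq: "(\<lambda>x\<in>A. g x) = f" if "f \<in> S" "\<And>x. x \<in> A \<Longrightarrow> g x = f x" for f g
  proof -
    have "(\<lambda>x\<in>A. g x) = (\<lambda>x\<in>A. f x)" using that(2) by (rule restrict_ext)
    also have "\<dots> = f" using ext that(1) by (intro extensional_restrict) blast
    finally show ?thesis .
  qed
  show ?thesis
  proof (rule ringI)
    show "abelian_group ?R"
    proof (rule abelian_groupI, simp_all add: add zero restrict_eq)
      show "\<exists>g\<in>S. (\<lambda>x\<in>A. g x + f x) = (\<lambda>x\<in>A. 0)" if "f \<in> S" for f
        by (intro bexI[OF _ uminus[OF that]] restrict_ext) simp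
    qed (auto simp: restrict_def add.assoc add.commute)
    show "monoid ?R"
      by (rule monoidI, simp_all add: mult one restrict_eq) (auto simp: restrict_def mult.assoc)
  qed (auto simp: restrict_def distrib_left distrib_right)
qed

lemma openin_coz: "continuous_map X euclideanreal g \<Longrightarrow> openin X (coz X g)"
  using openin_continuous_map_preimage[of X euclideanreal g "- {0}"] by (simp add: coz_def open_Compl)

lemma coz_mult: "coz X (\<lambda>x. g x * h x) = coz X g \<inter> coz X h"
  by (auto simp: coz_def)

lemma coz_const_one: "coz X (\<lambda>x. 1) = topspace X"
  by (simp add: coz_def)

lemma dense_openin_Int:
  assumes "openin X S" "X closure_of S = topspace X" "X closure_of T = topspace X"
  shows "X closure_of (S \<inter> T) = topspace X"
  using closure_of_openin_Int_closure_of[OF assms(1), of T] openin_subset[OF assms(1)] assms(2,3)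
  by (simp add: Int_absorb2)

lemma Tpp_common_dense_coz:
  assumes "f \<in> Tpp X" "h \<in> Tpp X"
  obtains g where "continuous_map X euclideanreal g" "X closure_of (coz X g) = topspace X"
    "continuous_map (subtopology X (coz X g)) euclideanreal f"
    "continuous_map (subtopology X (coz X g)) euclideanreal h"
proof -
  obtain g1 where g1: "continuous_map X euclideanreal g1" "X closure_of (coz X g1) = topspace X"
    "continuous_map (subtopology X (coz X g1)) euclideanreal f"
    using assms(1) unfolding Tpp_def by blast
  obtain g2 where g2: "continuous_map X euclideanreal g2" "X closure_of (coz X g2) = topspace X"
    "continuous_map (subtopology X (coz X g2)) euclideanreal h"
    using assms(2) unfolding Tpp_def by blast
  show ?thesis
  proof (rule that[of "\<lambda>x. g1 x * g2 x"], unfold coz_mult)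
    show "continuous_map X euclideanreal (\<lambda>x. g1 x * g2 x)"
      using g1(1) g2(1) by (rule continuous_map_real_mult)
    show "X closure_of (coz X g1 \<inter> coz X g2) = topspace X"
      using openin_coz[OF g1(1)] g1(2) g2(2) by (rule dense_openin_Int)
    show "continuous_map (subtopology X (coz X g1 \<inter> coz X g2)) euclideanreal f"
      using g1(3) by (rule continuous_map_from_subtopology_mono) blast
    show "continuous_map (subtopology X (coz X g1 \<inter> coz X g2)) euclideanreal h"
      using g2(3) by (rule continuous_map_from_subtopology_mono) blast
  qed
qed

lemma Tpp_pointwise:
  assumes "f \<in> Tpp X" "h \<in> Tpp X" and F: "continuous_on UNIV (\<lambda>z. F (fst z) (snd z))"
  shows "(\<lambda>x\<in>topspace X. F (f x) (h x)) \<in> Tpp X"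
proof -
  obtain g where g: "continuous_map X euclideanreal g" "X closure_of (coz X g) = topspace X"
    and f: "continuous_map (subtopology X (coz X g)) euclideanreal f"
    and h: "continuous_map (subtopology X (coz X g)) euclideanreal h"
    using assms(1,2) by (rule Tpp_common_dense_coz)
  have "continuous_map (prod_topology euclideanreal euclideanreal) euclideanreal
      (\<lambda>z. F (fst z) (snd z))"
    using F by (simp add: euclidean_product_topology)
  with continuous_map_pairedI[OF f h]
  have "continuous_map (subtopology X (coz X g)) euclideanreal
      ((\<lambda>z. F (fst z) (snd z)) \<circ> (\<lambda>x. (f x, h x)))"
    by (rule continuous_map_compose)
  then have "continuous_map (subtopology X (coz X g)) euclideanreal (\<lambda>x. F (f x) (h x))"
    by (simp add: o_def)
  then have "continuous_map (subtopology X (coz X g)) euclideanreal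
      (\<lambda>x\<in>topspace X. F (f x) (h x))"
    by (rule continuous_map_eq) simp
  then show ?thesis
    using g unfolding Tpp_def by (blast intro: restrict_extensional)
qed

lemma Tpp_const: "(\<lambda>x\<in>topspace X. c) \<in> Tpp X"
proof -
  have "continuous_map (subtopology X (coz X (\<lambda>x. 1))) euclideanreal (\<lambda>x\<in>topspace X. c)"
    by (rule continuous_map_eq[of _ _ "\<lambda>x. c"]) (auto simp: coz_const_one)
  moreover have "X closure_of (coz X (\<lambda>x. 1)) = topspace X"
    by (simp add: coz_const_one)
  ultimately show ?thesis
    unfolding Tpp_def by (intro CollectI conjI restrict_extensional exI[of _ "\<lambda>x. 1"]) simp_all
qed

theorem theorem2p1:
  fixes X :: "'a topology"
  assumes "t1_space X"
  shows "ring (Tpp_ring X)"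
  unfolding Tpp_ring_def
proof (rule ring_pointwiseI)
  show "Tpp X \<subseteq> extensional (topspace X)"
    unfolding Tpp_def by blast
  show "(\<lambda>x\<in>topspace X. f x + g x) \<in> Tpp X" if "f \<in> Tpp X" "g \<in> Tpp X" for f g
    using that by (rule Tpp_pointwise) (intro continuous_intros)
  show "(\<lambda>x\<in>topspace X. f x * g x) \<in> Tpp X" if "f \<in> Tpp X" "g \<in> Tpp X" for f g
    using that by (rule Tpp_pointwise) (intro continuous_intros)
  show "(\<lambda>x\<in>topspace X. - f x) \<in> Tpp X" if "f \<in> Tpp X" for f
    using that that by (rule Tpp_pointwise) (intro continuous_intros)
qed (rule Tpp_const)+

end
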